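(* Under the setting in the context, for every integer $v\ge1$ and every real $a>0$, the number $V$ of false discoveries of the knockoffs procedure with parameter $v$ satisfies $$\Pr\big(V\ge(1+a)v\big)\le\theta(a)^v,\qquad \theta(a)=\frac{(a+2)^{a+2}}{2^{a+2}(a+1)^{a+1}},$$ and $\theta(a)<1$.
   Context: Setting: $p\ge1$; $W_1,\dots,W_p$ are real random variables, almost surely pairwise distinct; $\chi_1,\dots,\chi_p$ take values in $\{-1,0,1\}$; $\mathcal H_0\subseteq\{1,\dots,p\}$ is the set of true nulls, and conditional on $(W_1,\dots,W_p)$ and $(\chi_j)_{j\notin\mathcal H_0}$, the variables $(\chi_j)_{j\in\mathcal H_0}$ are jointly independent and uniform on $\{-1,+1\}$. Knockoffs procedure with parameter $v$: let $\rho$ be the permutation with $W_{\rho(1)}>\cdots>W_{\rho(p)}$; let $j^\star$ be the position of the $v$-th $-1$ in $\chi_{\rho(1)},\dots,\chi_{\rho(p)}$ ($j^\star=p$ if fewer than $v$ entries equal $-1$); reject $\rho(j)$ for all $j\le j^\star$ with $\chi_{\rho(j)}=+1$. $V=\#\{j\in\mathcal H_0: j\text{ rejected}\}$. *)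

theory Defs
  imports "HOL-Probability.Probability"
begin

text \<open>Indices are 1..p. The permutation rho is represented by the list
  knockoff_order p w = [rho(1), ..., rho(p)], sorted by decreasing w.\<close>

definition knockoff_order :: "nat \<Rightarrow> (nat \<Rightarrow> real) \<Rightarrow> nat list" where
  "knockoff_order p w = sort_key (\<lambda>j. - w j) [1..<Suc p]"

text \<open>Position (1-based) of the v-th entry equal to -1 in chi(rho 1),...,chi(rho p);
  p if there are fewer than v such entries.\<close>
definition knockoff_jstar :: "nat \<Rightarrow> nat \<Rightarrow> (nat \<Rightarrow> real) \<Rightarrow> (nat \<Rightarrow> int) \<Rightarrow> nat" where
  "knockoff_jstar p v w c =
     (let cs = map c (knockoff_order p w) in
      if v \<le> length (filter (\<lambda>x. x = -1) cs)
      then (LEAST k. length (filter (\<lambda>x. x = -1) (take k cs)) = v)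
      else p)"

definition knockoff_rejections :: "nat \<Rightarrow> nat \<Rightarrow> (nat \<Rightarrow> real) \<Rightarrow> (nat \<Rightarrow> int) \<Rightarrow> nat set" where
  "knockoff_rejections p v w c =
     {knockoff_order p w ! (j - 1) | j. 1 \<le> j \<and> j \<le> knockoff_jstar p v w c
                                     \<and> c (knockoff_order p w ! (j - 1)) = 1}"

definition knockoff_V :: "nat \<Rightarrow> nat \<Rightarrow> nat set \<Rightarrow> (nat \<Rightarrow> real) \<Rightarrow> (nat \<Rightarrow> int) \<Rightarrow> nat" where
  "knockoff_V p v H0 w c = card (H0 \<inter> knockoff_rejections p v w c)"

definition knockoff_theta :: "real \<Rightarrow> real" where
  "knockoff_theta a = (a + 2) powr (a + 2) / (2 powr (a + 2) * (a + 1) powr (a + 1))"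

end

theory Submission
  imports Defs
begin

text \<open>Fix the ordering \<open>\<rho>\<close> produced by the \<open>W\<close>'s. Given it, the signs of the null
  variables are independent fair coins, and \<open>V\<close> is at most the number \<open>H\<close> of \<open>+1\<close>'s among the
  null signs, read in the order \<open>\<rho>\<close>, before their \<open>v\<close>-th \<open>-1\<close>: non-null signs can only
  stop the scan earlier. A one-step recursion on the first coin shows
  \<open>E t\<^sup>H \<le> c\<^sup>v\<close> whenever \<open>t c + 1 = 2 c\<close>, and Markov's inequality with the optimal
  \<open>t = 2(1+a)/(2+a)\<close>, \<open>c = (2+a)/2\<close> gives \<open>P(H \<ge> (1+a)v) \<le> (c / t\<^bsup>1+a\<^esup>)\<^sup>v = \<theta>(a)\<^sup>v\<close>.\<close>

fun plus_before_minus :: "int list \<Rightarrow> nat \<Rightarrow> nat" where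
  "plus_before_minus [] v = 0"
| "plus_before_minus (x # xs) 0 = 0"
| "plus_before_minus (x # xs) (Suc v) =
     (if x = 1 then Suc (plus_before_minus xs (Suc v))
      else if x = -1 then plus_before_minus xs v
      else plus_before_minus xs (Suc v))"

fun plus_elems_before_minus :: "('b \<Rightarrow> int) \<Rightarrow> 'b list \<Rightarrow> nat \<Rightarrow> 'b set" where
  "plus_elems_before_minus c [] v = {}"
| "plus_elems_before_minus c (x # xs) 0 = {}"
| "plus_elems_before_minus c (x # xs) (Suc v) =
     (if c x = 1 then insert x (plus_elems_before_minus c xs (Suc v))
      else if c x = -1 then plus_elems_before_minus c xs v
      else plus_elems_before_minus c xs (Suc v))"

lemma plus_before_minus_mono: "v \<le> v' \<Longrightarrow> plus_before_minus xs v \<le> plus_before_minus xs v'"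
proof (induction xs v arbitrary: v' rule: plus_before_minus.induct)
  case (3 x xs v)
  then obtain u where "v' = Suc u" "v \<le> u" by (cases v') auto
  with 3 show ?case by auto
qed simp_all

lemma finite_plus_elems_before_minus [simp]: "finite (plus_elems_before_minus c L v)"
  by (induction c L v rule: plus_elems_before_minus.induct) auto

lemma mem_plus_elems_before_minus:
  assumes "i < length L" "c (L ! i) = 1" "length (filter (\<lambda>x. x = -1) (take i (map c L))) < v"
  shows "L ! i \<in> plus_elems_before_minus c L v"
  using assms
proof (induction L arbitrary: i v)
  case (Cons x L)
  then obtain u where v: "v = Suc u" by (cases v) auto
  show ?case
  proof (cases i)
    case (Suc i')
    then show ?thesis using Cons.prems Cons.IH[of i' v] Cons.IH[of i' u] v by auto
  qed (use Cons.prems v in simp)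
qed simp

text \<open>Dropping the entries outside \<open>H\<close> can only delay the \<open>v\<close>-th \<open>-1\<close>.\<close>
lemma card_plus_elems_before_minus_le:
  "card (H \<inter> plus_elems_before_minus c L v) \<le> plus_before_minus (map c (filter (\<lambda>j. j \<in> H) L)) v"
proof (induction c L v rule: plus_elems_before_minus.induct)
  case (3 c x xs v)
  have "plus_before_minus (map c (filter (\<lambda>j. j \<in> H) xs)) v
        \<le> plus_before_minus (map c (filter (\<lambda>j. j \<in> H) xs)) (Suc v)"
    by (rule plus_before_minus_mono) simp
  with 3 show ?case by (auto simp: Int_insert_right card_insert_if)
qed simp_all

lemma length_filter_take_mono:
  assumes "i \<le> j"
  shows "length (filter P (take i xs)) \<le> length (filter P (take j xs))"
proof -
  have "take j xs = take i xs @ take (j - i) (drop i xs)"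
    using assms by (metis le_add_diff_inverse take_add)
  then show ?thesis by simp
qed

lemma ex_length_filter_take_eq:
  "v \<le> length (filter P xs) \<Longrightarrow> \<exists>k \<le> length xs. length (filter P (take k xs)) = v"
proof (induction xs arbitrary: v)
  case (Cons x xs)
  show ?case
  proof (cases v)
    case (Suc u)
    then obtain k where "k \<le> length xs" "length (filter P (take k xs)) = (if P x then u else v)"
      using Cons by (cases "P x") auto
    then show ?thesis using Suc by (intro exI[of _ "Suc k"]) auto
  qed (intro exI[of _ 0], simp)
qed simp

lemma knockoff_order_props:
  "length (knockoff_order p w) = p" "set (knockoff_order p w) = {1..p}" "distinct (knockoff_order p w)"
  unfolding knockoff_order_def by (auto simp: distinct_sort)

lemma less_knockoff_jstarD:
  assumes "i < knockoff_jstar p v w c"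
  shows "i < p \<and> length (filter (\<lambda>x. x = -1) (take i (map c (knockoff_order p w)))) < v"
proof -
  define cs where "cs = map c (knockoff_order p w)"
  let ?count = "\<lambda>k. length (filter (\<lambda>x. x = -1) (take k cs))"
  have len: "length cs = p" by (simp add: cs_def knockoff_order_props)
  show ?thesis
  proof (cases "v \<le> length (filter (\<lambda>x. x = -1) cs)")
    case True
    then have jstar: "knockoff_jstar p v w c = (LEAST k. ?count k = v)"
      by (simp add: knockoff_jstar_def cs_def)
    obtain k0 where k0: "k0 \<le> p" "?count k0 = v"
      using ex_length_filter_take_eq[OF True] len by auto
    let ?jstar = "LEAST k. ?count k = v"
    have "?count ?jstar = v" by (rule LeastI[of _ k0]) fact
    moreover have "?count i \<noteq> v" using assms jstar not_less_Least by auto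
    moreover have "?count i \<le> ?count ?jstar"
      using assms jstar by (intro length_filter_take_mono) simp
    moreover have "?jstar \<le> k0" by (rule Least_le) fact
    ultimately show ?thesis using assms jstar k0 by (simp add: cs_def)
  next
    case False
    then have "knockoff_jstar p v w c = p" by (simp add: knockoff_jstar_def cs_def)
    moreover have "?count i \<le> length (filter (\<lambda>x. x = -1) cs)"
      using length_filter_take_mono[of i "length cs" "\<lambda>x. x = -1" cs]
      by (cases "i \<le> length cs") simp_all
    ultimately show ?thesis using False assms by (simp add: cs_def)
  qed
qed

lemma knockoff_rejections_subset:
  "knockoff_rejections p v w c \<subseteq> plus_elems_before_minus c (knockoff_order p w) v"
proof
  fix y assume "y \<in> knockoff_rejections p v w c"
  then obtain j where j: "y = knockoff_order p w ! (j - 1)" "1 \<le> j" "j \<le> knockoff_jstar p v w c"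
    "c (knockoff_order p w ! (j - 1)) = 1"
    unfolding knockoff_rejections_def by auto
  then have "j - 1 < p \<and> length (filter (\<lambda>x. x = -1) (take (j - 1) (map c (knockoff_order p w)))) < v"
    by (intro less_knockoff_jstarD) simp
  with j show "y \<in> plus_elems_before_minus c (knockoff_order p w) v"
    by (simp add: mem_plus_elems_before_minus knockoff_order_props)
qed

lemma knockoff_V_le_plus_before_minus:
  "knockoff_V p v H0 w c \<le> plus_before_minus (map c (filter (\<lambda>j. j \<in> H0) (knockoff_order p w))) v"
proof -
  have "knockoff_V p v H0 w c \<le> card (H0 \<inter> plus_elems_before_minus c (knockoff_order p w) v)"
    unfolding knockoff_V_def using knockoff_rejections_subset[of p v w c] by (intro card_mono) auto
  also have "\<dots> \<le> plus_before_minus (map c (filter (\<lambda>j. j \<in> H0) (knockoff_order p w))) v"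
    by (rule card_plus_elems_before_minus_le)
  finally show ?thesis .
qed

lemma sum_PiE_insert:
  assumes "x \<notin> A"
  shows "(\<Sum>s\<in>PiE (insert x A) B. f s) = (\<Sum>y\<in>B x. \<Sum>g\<in>PiE A B. f (g(x := y)))"
proof -
  have "(\<Sum>s\<in>PiE (insert x A) B. f s) = (\<Sum>(y, g)\<in>B x \<times> PiE A B. f (g(x := y)))"
    unfolding PiE_insert_eq
    by (subst sum.reindex[OF inj_combinator[OF assms]]) (simp add: case_prod_beta comp_def)
  also have "\<dots> = (\<Sum>y\<in>B x. \<Sum>g\<in>PiE A B. f (g(x := y)))"
    by (rule sum.cartesian_product[symmetric])
  finally show ?thesis .
qed

text \<open>The generating function of the number of \<open>+1\<close>'s before the \<open>v\<close>-th \<open>-1\<close> among fair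
  signs: conditioning on the first sign gives the recursion \<open>G v = (t G v + G (v - 1)) / 2\<close>,
  solved by \<open>c ^ v\<close> exactly when \<open>t c + 1 = 2 c\<close>.\<close>
lemma sum_signs_power_plus_before_minus_le:
  fixes t c :: real
  assumes "distinct l" "t \<ge> 0" "c \<ge> 1" "t * c + 1 = 2 * c"
  shows "(\<Sum>s\<in>PiE (set l) (\<lambda>_. {-1, 1::int}). t ^ plus_before_minus (map s l) v)
           \<le> 2 ^ length l * c ^ v"
  using assms(1)
proof (induction l arbitrary: v)
  case Nil
  then show ?case using assms by simp
next
  case (Cons x l)
  let ?G = "\<lambda>v. \<Sum>s\<in>PiE (set l) (\<lambda>_. {-1, 1::int}). t ^ plus_before_minus (map s l) v"
  have x: "x \<notin> set l" and l: "distinct l" using Cons.prems by auto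
  show ?case
  proof (cases v)
    case 0
    have "card (PiE (set (x # l)) (\<lambda>_. {-1, 1::int})) = 2 ^ length (x # l)"
      using Cons.prems by (simp add: card_PiE distinct_card numeral_2_eq_2)
    then show ?thesis using 0 by simp
  next
    case (Suc u)
    have "(\<Sum>s\<in>PiE (set (x # l)) (\<lambda>_. {-1, 1::int}). t ^ plus_before_minus (map s (x # l)) v)
        = t * ?G v + ?G u"
      using x Suc by (simp add: sum_PiE_insert sum_distrib_left)
    also have "\<dots> \<le> t * (2 ^ length l * c ^ v) + 2 ^ length l * c ^ u"
      using Cons.IH[OF l] assms(2) by (intro add_mono mult_left_mono) auto
    also have "\<dots> = 2 ^ length l * c ^ u * (t * c + 1)"
      using Suc by (simp add: algebra_simps)
    also have "\<dots> = 2 ^ length (x # l) * c ^ v"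
      using Suc assms(4) by simp
    finally show ?thesis .
  qed
qed

lemma card_plus_before_minus_ge_le:
  fixes t c r :: real
  assumes "distinct l" "t \<ge> 1" "c \<ge> 1" "t * c + 1 = 2 * c"
  shows "real (card {s \<in> PiE (set l) (\<lambda>_. {-1, 1::int}). r \<le> plus_before_minus (map s l) v})
           \<le> 2 ^ length l * c ^ v / t powr r"
proof -
  let ?P = "PiE (set l) (\<lambda>_. {-1, 1::int})"
  let ?h = "\<lambda>s. plus_before_minus (map s l) v"
  have tr: "t powr r > 0" using assms by simp
  have "real (card {s \<in> ?P. r \<le> ?h s}) = (\<Sum>s \<in> {s \<in> ?P. r \<le> ?h s}. 1)" by simp
  also have "\<dots> \<le> (\<Sum>s \<in> {s \<in> ?P. r \<le> ?h s}. t ^ ?h s / t powr r)"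
  proof (rule sum_mono)
    fix s assume "s \<in> {s \<in> ?P. r \<le> ?h s}"
    then have "t powr r \<le> t powr ?h s" using assms by (intro powr_mono) auto
    then show "1 \<le> t ^ ?h s / t powr r" using tr assms by (simp add: powr_realpow)
  qed
  also have "\<dots> \<le> (\<Sum>s \<in> ?P. t ^ ?h s / t powr r)"
    using tr assms by (intro sum_mono2) (auto simp: finite_PiE)
  also have "\<dots> = (\<Sum>s \<in> ?P. t ^ ?h s) / t powr r" by (simp add: sum_divide_distrib)
  also have "\<dots> \<le> 2 ^ length l * c ^ v / t powr r"
    using sum_signs_power_plus_before_minus_le[OF assms(1) _ assms(3,4)] assms tr
    by (intro divide_right_mono) auto
  finally show ?thesis .
qed

lemma ln_less_minus_one:
  fixes x :: real
  assumes "0 < x" "x \<noteq> 1"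
  shows "ln x < x - 1"
proof -
  have "ln x = 2 * ln (sqrt x)" using assms by (simp add: ln_sqrt)
  also have "\<dots> \<le> 2 * (sqrt x - 1)" using ln_le_minus_one[of "sqrt x"] assms by simp
  also have "\<dots> < x - 1"
  proof -
    have "(sqrt x - 1)\<^sup>2 > 0" using assms by simp
    then show ?thesis using assms by (simp add: power2_eq_square algebra_simps)
  qed
  finally show ?thesis .
qed

lemma knockoff_theta_eq:
  assumes "a > 0"
  shows "knockoff_theta a = ((a + 2) / 2) / (2 * (a + 1) / (a + 2)) powr (a + 1)"
proof -
  have succ: "b powr (a + 2) = b * b powr (a + 1)" if "b > 0" for b :: real
    using that powr_add[of b 1 "a + 1"] by (simp add: add.commute add.left_commute)
  have "(2 * (a + 1) / (a + 2)) powr (a + 1)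
      = 2 powr (a + 1) * (a + 1) powr (a + 1) / (a + 2) powr (a + 1)"
    using assms powr_mult[of 2 "a + 1" "a + 1"] powr_divide[of "2 * (a + 1)" "a + 2" "a + 1"]
    by simp
  then have "((a + 2) / 2) / (2 * (a + 1) / (a + 2)) powr (a + 1)
      = (a + 2) * (a + 2) powr (a + 1) / (2 * 2 powr (a + 1) * (a + 1) powr (a + 1))"
    using assms by (simp add: field_simps)
  also have "\<dots> = knockoff_theta a"
    using assms unfolding knockoff_theta_def by (simp add: succ)
  finally show ?thesis ..
qed

lemma knockoff_theta_less_one:
  assumes "a > 0"
  shows "knockoff_theta a < 1"
proof -
  define t where "t = 2 * (a + 1) / (a + 2)"
  define c where "c = (a + 2) / 2"
  have t: "t > 0" and c: "c > 0" using assms by (auto simp: t_def c_def)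
  have "ln c < c - 1" using assms by (intro ln_less_minus_one) (auto simp: c_def)
  also have "c - 1 = (a + 1) * (1 - 1 / t)" using assms by (simp add: c_def t_def field_simps)
  also have "\<dots> \<le> (a + 1) * ln t"
  proof -
    have "ln (1 / t) \<le> 1 / t - 1" using t by (intro ln_le_minus_one) simp
    then show ?thesis using assms t by (intro mult_left_mono) (auto simp: ln_div)
  qed
  finally have "exp (ln c) < exp ((a + 1) * ln t)" by simp
  then have "c < t powr (a + 1)" using c t by (simp add: powr_def mult.commute)
  moreover have "knockoff_theta a = c / t powr (a + 1)"
    unfolding c_def t_def by (rule knockoff_theta_eq[OF assms])
  ultimately show ?thesis using t by simp
qed

lemma card_plus_before_minus_ge_le_theta:
  assumes "distinct l" "a > 0"
  shows "real (card {s \<in> PiE (set l) (\<lambda>_. {-1, 1::int}).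
                       (1 + a) * real v \<le> plus_before_minus (map s l) v})
           \<le> knockoff_theta a ^ v * 2 ^ length l"
proof -
  define t where "t = 2 * (a + 1) / (a + 2)"
  define c where "c = (a + 2) / 2"
  have t: "t \<ge> 1" and c: "c \<ge> 1" and tc: "t * c + 1 = 2 * c"
    using assms(2) by (auto simp: t_def c_def field_simps)
  have "t powr ((1 + a) * real v) = (t powr (a + 1)) ^ v"
    using t by (simp add: powr_powr powr_realpow add.commute flip: powr_realpow)
  moreover have "knockoff_theta a = c / t powr (a + 1)"
    unfolding c_def t_def by (rule knockoff_theta_eq[OF assms(2)])
  ultimately show ?thesis
    using card_plus_before_minus_ge_le[OF assms(1) t c tc, of "(1 + a) * real v" v]
    by (simp add: power_divide mult.commute)
qed

lemma measurable_insort_key: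
  fixes f :: "'a \<Rightarrow> 'b \<Rightarrow> real"
  assumes f: "\<And>j. j \<in> S \<Longrightarrow> (\<lambda>\<omega>. f \<omega> j) \<in> borel_measurable N" and "x \<in> S" "set ys \<subseteq> S"
  shows "(\<lambda>\<omega>. insort_key (f \<omega>) x ys) \<in> measurable N (count_space UNIV)"
  using assms(3)
proof (induction ys)
  case (Cons y ys)
  have "{\<omega> \<in> space N. f \<omega> x \<le> f \<omega> y} \<in> sets N"
    using Cons.prems \<open>x \<in> S\<close> by (intro borel_measurable_le f) auto
  moreover have "(\<lambda>\<omega>. y # insort_key (f \<omega>) x ys) \<in> measurable N (count_space UNIV)"
    using Cons by (intro measurable_compose[where g = "(#) y", OF _ measurable_count_space]) auto
  ultimately have "(\<lambda>\<omega>. if f \<omega> x \<le> f \<omega> y then x # y # ys else y # insort_key (f \<omega>) x ys)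
      \<in> measurable N (count_space UNIV)"
    by (intro measurable_If) auto
  then show ?case by simp
qed simp

lemma measurable_sort_key:
  fixes f :: "'a \<Rightarrow> 'b::countable \<Rightarrow> real"
  assumes f: "\<And>j. j \<in> S \<Longrightarrow> (\<lambda>\<omega>. f \<omega> j) \<in> borel_measurable N" and "set xs \<subseteq> S"
  shows "(\<lambda>\<omega>. sort_key (f \<omega>) xs) \<in> measurable N (count_space UNIV)"
  using assms(2)
proof (induction xs)
  case (Cons x xs)
  have sorted: "(\<lambda>\<omega>. sort_key (f \<omega>) xs) \<in> measurable N (count_space {ys. set ys \<subseteq> S})"
  proof (rule measurable_count_space_extend[OF subset_UNIV])
    show "(\<lambda>\<omega>. sort_key (f \<omega>) xs) \<in> space N \<rightarrow> {ys. set ys \<subseteq> S}"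
      using Cons.prems by auto
  qed (use Cons in auto)
  have "(\<lambda>\<omega>. insort_key (f \<omega>) x (sort_key (f \<omega>) xs)) \<in> measurable N (count_space UNIV)"
  proof (rule measurable_compose_countable'[where f = "\<lambda>ys \<omega>. insort_key (f \<omega>) x ys", OF _ sorted])
    fix ys assume "ys \<in> {ys. set ys \<subseteq> S}"
    then show "(\<lambda>\<omega>. insort_key (f \<omega>) x ys) \<in> measurable N (count_space UNIV)"
      using Cons.prems by (intro measurable_insort_key[OF f]) auto
  qed (rule countable_subset[OF subset_UNIV], simp)
  then show ?case by simp
qed simp

lemma knockoff_order_event_in_sigma:
  "{\<omega> \<in> \<Omega>. knockoff_order p (\<lambda>j. W j \<omega>) = L}
     \<in> sigma_sets \<Omega> (\<Union>j\<in>{1..p}. {W j -` A \<inter> \<Omega> | A. A \<in> sets borel})"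
  (is "_ \<in> sigma_sets \<Omega> ?G")
proof -
  define N where "N = sigma \<Omega> ?G"
  have G: "?G \<subseteq> Pow \<Omega>" by auto
  have neg_W: "(\<lambda>\<omega>. - W j \<omega>) \<in> borel_measurable N" if "j \<in> {1..p}" for j
  proof -
    have "W j \<in> borel_measurable N"
    proof (rule measurableI)
      fix A :: "real set" assume "A \<in> sets borel"
      then have "W j -` A \<inter> \<Omega> \<in> ?G" using that by blast
      then show "W j -` A \<inter> space N \<in> sets N"
        using G by (simp add: N_def sets_measure_of space_measure_of)
    qed simp
    then show ?thesis by (rule borel_measurable_uminus)
  qed
  have "(\<lambda>\<omega>. knockoff_order p (\<lambda>j. W j \<omega>)) \<in> measurable N (count_space UNIV)"
    unfolding knockoff_order_def by (rule measurable_sort_key[where S = "{1..p}", OF neg_W]) auto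
  then have "(\<lambda>\<omega>. knockoff_order p (\<lambda>j. W j \<omega>)) -` {L} \<inter> space N \<in> sets N"
    by (rule measurable_sets) simp
  then show ?thesis
    using G by (simp add: N_def sets_measure_of space_measure_of vimage_def Int_def conj_commute)
qed

lemma (in prob_space) measure_le_if_few_bad_uniform_given:
  fixes X :: "'a \<Rightarrow> 'b" and Y :: "'a \<Rightarrow> 'c" and \<beta> :: real
  assumes T: "finite T" "\<And>\<omega>. \<omega> \<in> space M \<Longrightarrow> X \<omega> \<in> T"
    and X_events: "\<And>x. x \<in> T \<Longrightarrow> {\<omega> \<in> space M. X \<omega> = x} \<in> events"
    and S: "finite S" "S \<noteq> {}"
    and Y_events: "\<And>s. s \<in> S \<Longrightarrow> {\<omega> \<in> space M. Y \<omega> = s} \<in> events"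
    and uniform: "\<And>x s. x \<in> T \<Longrightarrow> s \<in> S \<Longrightarrow>
        prob {\<omega> \<in> space M. X \<omega> = x \<and> Y \<omega> = s} = prob {\<omega> \<in> space M. X \<omega> = x} / card S"
    and few_bad: "\<And>x. x \<in> T \<Longrightarrow> card {s \<in> S. Q x s} \<le> \<beta> * card S"
    and E: "E \<subseteq> {\<omega> \<in> space M. Q (X \<omega>) (Y \<omega>)}"
  shows "measure M E \<le> \<beta>"
proof -
  define A where "A x s = {\<omega> \<in> space M. X \<omega> = x \<and> Y \<omega> = s}" for x s
  define B where "B x S' = (\<Union>s\<in>S'. A x s)" for x S'
  have A_events: "A x s \<in> events" if "x \<in> T" "s \<in> S" for x s
  proof -
    have "A x s = {\<omega> \<in> space M. X \<omega> = x} \<inter> {\<omega> \<in> space M. Y \<omega> = s}" by (auto simp: A_def)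
    then show ?thesis using that X_events Y_events by simp
  qed
  have B_events: "B x S' \<in> events" if "x \<in> T" "S' \<subseteq> S" for x S'
  proof -
    have "finite S'" using that S finite_subset by blast
    then show ?thesis unfolding B_def using that A_events by (intro sets.finite_UN) auto
  qed
  have prob_B: "prob (B x S') = card S' * prob {\<omega> \<in> space M. X \<omega> = x} / card S"
    if "x \<in> T" "S' \<subseteq> S" for x S'
  proof -
    have "prob (B x S') = (\<Sum>s\<in>S'. prob (A x s))"
      unfolding B_def using that A_events finite_subset[OF that(2) S(1)]
      by (intro measure_finite_Union) (auto simp: disjoint_family_on_def A_def)
    also have "\<dots> = card S' * prob {\<omega> \<in> space M. X \<omega> = x} / card S"
      using that uniform by (simp add: A_def subset_iff)
    finally show ?thesis .
  qed
  have sum_prob_X: "(\<Sum>x\<in>T. prob {\<omega> \<in> space M. X \<omega> = x}) = 1"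
  proof -
    have "(\<Sum>x\<in>T. prob {\<omega> \<in> space M. X \<omega> = x}) = prob (\<Union>x\<in>T. {\<omega> \<in> space M. X \<omega> = x})"
      using T X_events by (intro measure_finite_Union[symmetric]) (auto simp: disjoint_family_on_def)
    also have "(\<Union>x\<in>T. {\<omega> \<in> space M. X \<omega> = x}) = space M" using T by auto
    finally show ?thesis by (simp add: prob_space)
  qed
  txt \<open>Summing \<open>uniform\<close> over \<open>S\<close> shows that \<open>Y\<close> lies in \<open>S\<close> almost surely.\<close>
  have null: "prob (\<Union>x\<in>T. {\<omega> \<in> space M. X \<omega> = x} - B x S) = 0"
  proof -
    have "prob ({\<omega> \<in> space M. X \<omega> = x} - B x S) = 0" if "x \<in> T" for x
    proof -
      have "B x S \<subseteq> {\<omega> \<in> space M. X \<omega> = x}" by (auto simp: B_def A_def)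
      then show ?thesis
        using that S X_events B_events prob_B[of x S] by (subst finite_measure_Diff) auto
    qed
    moreover have "prob (\<Union>x\<in>T. {\<omega> \<in> space M. X \<omega> = x} - B x S)
        \<le> (\<Sum>x\<in>T. prob ({\<omega> \<in> space M. X \<omega> = x} - B x S))"
      using T X_events B_events by (intro finite_measure_subadditive_finite) auto
    ultimately show ?thesis using measure_nonneg[of M] by (simp add: order_antisym)
  qed
  define bad where "bad x = {s \<in> S. Q x s}" for x
  have bad_events: "(\<Union>x\<in>T. B x (bad x)) \<in> events"
    using T B_events by (intro sets.finite_UN) (auto simp: bad_def)
  have null_events: "(\<Union>x\<in>T. {\<omega> \<in> space M. X \<omega> = x} - B x S) \<in> events"
    using T X_events B_events by (intro sets.finite_UN sets.Diff) auto
  have "E \<subseteq> (\<Union>x\<in>T. {\<omega> \<in> space M. X \<omega> = x} - B x S) \<union> (\<Union>x\<in>T. B x (bad x))"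
    using E T by (auto simp: B_def A_def bad_def)
  then have "measure M E
      \<le> prob (\<Union>x\<in>T. {\<omega> \<in> space M. X \<omega> = x} - B x S) + prob (\<Union>x\<in>T. B x (bad x))"
    using null_events bad_events
    by (intro order.trans[OF finite_measure_mono measure_Un_le]) auto
  also have "\<dots> \<le> (\<Sum>x\<in>T. prob (B x (bad x)))"
    unfolding null using T B_events
    by (simp, intro finite_measure_subadditive_finite) (auto simp: bad_def)
  also have "\<dots> \<le> (\<Sum>x\<in>T. \<beta> * prob {\<omega> \<in> space M. X \<omega> = x})"
  proof (rule sum_mono)
    fix x assume x: "x \<in> T"
    have "card (bad x) * prob {\<omega> \<in> space M. X \<omega> = x}
        \<le> \<beta> * card S * prob {\<omega> \<in> space M. X \<omega> = x}"
      using few_bad[OF x] by (intro mult_right_mono) (auto simp: bad_def)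
    then show "prob (B x (bad x)) \<le> \<beta> * prob {\<omega> \<in> space M. X \<omega> = x}"
      using x S prob_B[of x "bad x"] by (simp add: bad_def divide_le_eq card_gt_0_iff mult_ac)
  qed
  also have "\<dots> = \<beta>" by (simp add: sum_distrib_left[symmetric] sum_prob_X)
  finally show ?thesis .
qed

lemma (in prob_space) knockoff_V_tail_le:
  fixes W :: "nat \<Rightarrow> 'a \<Rightarrow> real" and chi :: "nat \<Rightarrow> 'a \<Rightarrow> int"
  assumes "H0 \<subseteq> {1..p}" "a > 0"
    and order_events: "\<And>L. {\<omega> \<in> space M. knockoff_order p (\<lambda>j. W j \<omega>) = L} \<in> events"
    and chi_events: "\<And>j k. j \<in> H0 \<Longrightarrow> {\<omega> \<in> space M. chi j \<omega> = k} \<in> events"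
    and uniform: "\<And>L s. s \<in> PiE H0 (\<lambda>_. {-1, 1}) \<Longrightarrow>
      prob ({\<omega> \<in> space M. knockoff_order p (\<lambda>j. W j \<omega>) = L} \<inter> {\<omega> \<in> space M. \<forall>j\<in>H0. chi j \<omega> = s j})
        = prob {\<omega> \<in> space M. knockoff_order p (\<lambda>j. W j \<omega>) = L} / 2 ^ card H0"
  shows "prob {\<omega> \<in> space M. real (knockoff_V p v H0 (\<lambda>j. W j \<omega>) (\<lambda>j. chi j \<omega>)) \<ge> (1 + a) * real v}
           \<le> knockoff_theta a ^ v"
proof -
  define order where "order \<omega> = knockoff_order p (\<lambda>j. W j \<omega>)" for \<omega>
  define signs where "signs \<omega> = restrict (\<lambda>j. chi j \<omega>) H0" for \<omega>
  define nulls_of where "nulls_of L = filter (\<lambda>j. j \<in> H0) L" for L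
  define S where "S = PiE H0 (\<lambda>_. {-1, 1::int})"
  have H0: "finite H0" using assms(1) finite_subset by blast
  have card_S: "card S = 2 ^ card H0" using H0 by (simp add: S_def card_PiE numeral_2_eq_2)
  have signs_eq: "signs \<omega> = s \<longleftrightarrow> (\<forall>j\<in>H0. chi j \<omega> = s j)" if "s \<in> S" for s \<omega>
    using that by (auto simp: signs_def S_def PiE_iff extensional_def)
  show ?thesis
  proof (rule measure_le_if_few_bad_uniform_given[where X = order and Y = signs and S = S
        and T = "{L. distinct L \<and> set L = {1..p}}"
        and Q = "\<lambda>L s. (1 + a) * real v \<le> plus_before_minus (map s (nulls_of L)) v"])
    show "finite {L. distinct L \<and> set L = {1..p}}"
      by (rule finite_subset[OF _ finite_subset_distinct[of "{1..p}"]]) auto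
    show "finite S" "S \<noteq> {}" using H0 by (auto simp: S_def finite_PiE PiE_eq_empty_iff)
    show "order \<omega> \<in> {L. distinct L \<and> set L = {1..p}}" for \<omega>
      by (simp add: order_def knockoff_order_props)
    show "{\<omega> \<in> space M. order \<omega> = L} \<in> events" for L
      unfolding order_def by (rule order_events)
    show "{\<omega> \<in> space M. signs \<omega> = s} \<in> events" if "s \<in> S" for s
      using H0 chi_events signs_eq[OF that] by (auto intro: sets.sets_Collect_finite_All)
    show "prob {\<omega> \<in> space M. order \<omega> = L \<and> signs \<omega> = s}
        = prob {\<omega> \<in> space M. order \<omega> = L} / card S"
      if "s \<in> S" for L s
    proof -
      have "{\<omega> \<in> space M. order \<omega> = L \<and> signs \<omega> = s}
          = {\<omega> \<in> space M. order \<omega> = L} \<inter> {\<omega> \<in> space M. \<forall>j\<in>H0. chi j \<omega> = s j}"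
        using signs_eq[OF that] by auto
      then show ?thesis using uniform that card_S by (simp add: S_def order_def)
    qed
    show "real (card {s \<in> S. (1 + a) * real v \<le> plus_before_minus (map s (nulls_of L)) v})
        \<le> knockoff_theta a ^ v * card S"
      if "L \<in> {L. distinct L \<and> set L = {1..p}}" for L
    proof -
      have L: "distinct (nulls_of L)" "set (nulls_of L) = H0"
        using that assms(1) by (auto simp: nulls_of_def)
      then have "card S = 2 ^ length (nulls_of L)"
        using card_S distinct_card[OF L(1)] by simp
      then show ?thesis
        using card_plus_before_minus_ge_le_theta[OF L(1) \<open>a > 0\<close>, of v] L(2) by (simp add: S_def)
    qed
    show "{\<omega> \<in> space M. real (knockoff_V p v H0 (\<lambda>j. W j \<omega>) (\<lambda>j. chi j \<omega>)) \<ge> (1 + a) * real v}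
        \<subseteq> {\<omega> \<in> space M. (1 + a) * real v \<le> plus_before_minus (map (signs \<omega>) (nulls_of (order \<omega>))) v}"
    proof safe
      fix \<omega> assume "(1 + a) * real v \<le> real (knockoff_V p v H0 (\<lambda>j. W j \<omega>) (\<lambda>j. chi j \<omega>))"
      also have "\<dots> \<le> plus_before_minus (map (\<lambda>j. chi j \<omega>) (nulls_of (order \<omega>))) v"
        using knockoff_V_le_plus_before_minus by (simp add: order_def nulls_of_def)
      also have "map (\<lambda>j. chi j \<omega>) (nulls_of (order \<omega>)) = map (signs \<omega>) (nulls_of (order \<omega>))"
        by (simp add: signs_def nulls_of_def)
      finally show "(1 + a) * real v \<le> plus_before_minus (map (signs \<omega>) (nulls_of (order \<omega>))) v" .
    qed
  qed
qed

text \<open>Neither are \<open>chi_vals\<close>,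
  \<open>p \<ge> 1\<close> and \<open>v \<ge> 1\<close>.\<close>
theorem corollary1:
  fixes M :: "'a measure" and p v :: nat and a :: real
    and W :: "nat \<Rightarrow> 'a \<Rightarrow> real" and chi :: "nat \<Rightarrow> 'a \<Rightarrow> int" and H0 :: "nat set"
  assumes "prob_space M"
    and "p \<ge> 1"
    and "H0 \<subseteq> {1..p}"
    and W_meas: "\<And>j. j \<in> {1..p} \<Longrightarrow> W j \<in> borel_measurable M"
    and chi_meas: "\<And>j. j \<in> {1..p} \<Longrightarrow> chi j \<in> measurable M (count_space UNIV)"
    and chi_vals: "\<And>j \<omega>. j \<in> {1..p} \<Longrightarrow> \<omega> \<in> space M \<Longrightarrow> chi j \<omega> \<in> {-1, 0, 1}"
    and distinct: "AE \<omega> in M. \<forall>i\<in>{1..p}. \<forall>j\<in>{1..p}. i \<noteq> j \<longrightarrow> W i \<omega> \<noteq> W j \<omega>"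
    and nulls: "\<And>B s. B \<in> sigma_sets (space M)
                   ((\<Union>j\<in>{1..p}. {W j -` A \<inter> space M | A. A \<in> sets borel})
                    \<union> (\<Union>j\<in>{1..p} - H0. {chi j -` A \<inter> space M | A. True}))
              \<Longrightarrow> (\<forall>j\<in>H0. s j \<in> {-1, 1})
              \<Longrightarrow> measure M (B \<inter> {\<omega> \<in> space M. \<forall>j\<in>H0. chi j \<omega> = s j})
                    = measure M B / 2 ^ card H0"
    and "v \<ge> 1"
    and "a > 0"
  shows "measure M {\<omega> \<in> space M.
            real (knockoff_V p v H0 (\<lambda>j. W j \<omega>) (\<lambda>j. chi j \<omega>)) \<ge> (1 + a) * real v}
           \<le> knockoff_theta a ^ v
         \<and> knockoff_theta a < 1"
proof
  interpret prob_space M by fact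
  let ?G_W = "\<Union>j\<in>{1..p}. {W j -` A \<inter> space M | A. A \<in> sets borel}"
  have order_sigma:
    "{\<omega> \<in> space M. knockoff_order p (\<lambda>j. W j \<omega>) = L} \<in> sigma_sets (space M) ?G_W" for L
    by (rule knockoff_order_event_in_sigma)
  have W_events: "sigma_sets (space M) ?G_W \<subseteq> events"
    using measurable_sets[OF W_meas] by (intro sets.sigma_sets_subset) blast
  show "measure M {\<omega> \<in> space M.
      real (knockoff_V p v H0 (\<lambda>j. W j \<omega>) (\<lambda>j. chi j \<omega>)) \<ge> (1 + a) * real v} \<le> knockoff_theta a ^ v"
  proof (rule knockoff_V_tail_le[OF assms(3) \<open>a > 0\<close>])
    show "{\<omega> \<in> space M. knockoff_order p (\<lambda>j. W j \<omega>) = L} \<in> events" for L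
      using order_sigma W_events by blast
    show "{\<omega> \<in> space M. chi j \<omega> = k} \<in> events" if "j \<in> H0" for j k
      using measurable_sets[OF chi_meas, of j "{k}"] that assms(3)
      by (auto simp: vimage_def Int_def conj_commute)
    show "prob ({\<omega> \<in> space M. knockoff_order p (\<lambda>j. W j \<omega>) = L} \<inter> {\<omega> \<in> space M. \<forall>j\<in>H0. chi j \<omega> = s j})
        = prob {\<omega> \<in> space M. knockoff_order p (\<lambda>j. W j \<omega>) = L} / 2 ^ card H0"
      if "s \<in> PiE H0 (\<lambda>_. {-1, 1})" for L s
      using that order_sigma[of L] sigma_sets_mono'[OF Un_upper1] by (intro nulls) (auto simp: PiE_iff)
  qed
qed (rule knockoff_theta_less_one[OF \<open>a > 0\<close>])

end
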